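(* $\mathfrak a_{11}(n)=\mathfrak a_{16}(n)$ for all $n\ge4$, and $\mathfrak a_{13}(n)=\mathfrak a_{20}(n)$ for all $n\ge3$.
   Context: Pauli matrices $I,X,Y,Z$; $A_jB_{j+1}$ denotes the length-$n$ Pauli string with $A$ at position $j$, $B$ at $j+1$, $I$ elsewhere. For a set $S$ of Pauli strings, $\mathrm{Lie}\langle S\rangle$ is the smallest real Lie subalgebra of $\mathfrak u(2^n)$ containing $\{iP:P\in S\}$. For a set $G$ of two-qubit strings, $G(n)=\mathrm{Lie}\langle A_jB_{j+1}:AB\in G,1\le j\le n-1\rangle$. Generating sets: $\mathfrak a_{11}=\{XY,YX,YZ\}$, $\mathfrak a_{16}=\{XY,YX,YZ,ZY\}$, $\mathfrak a_{13}=\{XX,YY,YZ\}$, $\mathfrak a_{20}=\{XX,YY,ZZ,ZY\}$. *)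

theory Defs
  imports Complex_Main "Jordan_Normal_Form.Schur_Decomposition"
begin

datatype pauli = PI | PX | PY | PZ

fun pauli_entry :: "pauli \<Rightarrow> nat \<Rightarrow> nat \<Rightarrow> complex" where
  "pauli_entry PI a b = (if a = b then 1 else 0)"
| "pauli_entry PX a b = (if a \<noteq> b then 1 else 0)"
| "pauli_entry PY a b = (if a = b then 0 else if a = 0 then - \<i> else \<i>)"
| "pauli_entry PZ a b = (if a = b then (if a = 0 then 1 else -1) else 0)"

text \<open>Matrix of a Pauli string (list of letters, position 0 is the leftmost / most
  significant tensor factor): the Kronecker product of the letters, a 2^n x 2^n matrix.\<close>
definition pauli_string_mat :: "pauli list \<Rightarrow> complex mat" where
  "pauli_string_mat ws = (let n = length ws in
     mat (2^n) (2^n) (\<lambda>(r, c). \<Prod>k<n. pauli_entry (ws ! k)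
        ((r div 2^(n - 1 - k)) mod 2) ((c div 2^(n - 1 - k)) mod 2)))"

definition real_lie_subalg_u :: "nat \<Rightarrow> complex mat set \<Rightarrow> bool" where
  "real_lie_subalg_u N L \<longleftrightarrow>
     L \<subseteq> carrier_mat N N \<and>
     (\<forall>A\<in>L. mat_adjoint A = - A) \<and>
     0\<^sub>m N N \<in> L \<and>
     (\<forall>A\<in>L. \<forall>B\<in>L. A + B \<in> L) \<and>
     (\<forall>A\<in>L. \<forall>r::real. complex_of_real r \<cdot>\<^sub>m A \<in> L) \<and>
     (\<forall>A\<in>L. \<forall>B\<in>L. A * B - B * A \<in> L)"

definition lie_gen :: "nat \<Rightarrow> pauli list set \<Rightarrow> complex mat set" where
  "lie_gen n S = \<Inter>{L. real_lie_subalg_u (2^n) L \<and>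
                      (\<forall>P\<in>S. \<i> \<cdot>\<^sub>m pauli_string_mat P \<in> L)}"

text \<open>A_j B_{j+1} with 0-based position j (j + 1 < n).\<close>
definition two_local :: "nat \<Rightarrow> nat \<Rightarrow> pauli \<Rightarrow> pauli \<Rightarrow> pauli list" where
  "two_local n j A B = replicate j PI @ [A, B] @ replicate (n - j - 2) PI"

definition G_alg :: "(pauli \<times> pauli) set \<Rightarrow> nat \<Rightarrow> complex mat set" where
  "G_alg G n = lie_gen n {two_local n j A B | j A B. (A, B) \<in> G \<and> j + 1 < n}"

definition a11 :: "(pauli \<times> pauli) set" where "a11 = {(PX,PY),(PY,PX),(PY,PZ)}"
definition a16 :: "(pauli \<times> pauli) set" where "a16 = {(PX,PY),(PY,PX),(PY,PZ),(PZ,PY)}"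
definition a13 :: "(pauli \<times> pauli) set" where "a13 = {(PX,PX),(PY,PY),(PY,PZ)}"
definition a20 :: "(pauli \<times> pauli) set" where "a20 = {(PX,PX),(PY,PY),(PZ,PZ),(PZ,PY)}"

end

theory Submission
  imports Defs
begin

(* The generators are i times Pauli strings, and for anticommuting Pauli strings P, Q the
   commutator [iP, iQ] is a real multiple of i PQ.  Hence the Lie algebra generated by the
   two-local terms of G contains i W for every string W obtained from the G-terms of a window
   of k consecutive qubits by repeatedly multiplying anticommuting pairs, with the window placed
   anywhere in the chain.  In a window of four qubits ZY is obtained in this way from XY, YX, YZ;
   in a window of three qubits ZZ and ZY are obtained from XX, YY, YZ and, conversely, YZ from
   XX, YY, ZZ, ZY.  All other generators are shared, so the generated algebras coincide. *)

fun pauli_mult :: "pauli \<Rightarrow> pauli \<Rightarrow> complex \<times> pauli" where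
  "pauli_mult PI b = (1, b)"
| "pauli_mult a PI = (1, a)"
| "pauli_mult PX PX = (1, PI)" | "pauli_mult PY PY = (1, PI)" | "pauli_mult PZ PZ = (1, PI)"
| "pauli_mult PX PY = (\<i>, PZ)" | "pauli_mult PY PX = (-\<i>, PZ)"
| "pauli_mult PY PZ = (\<i>, PX)" | "pauli_mult PZ PY = (-\<i>, PX)"
| "pauli_mult PZ PX = (\<i>, PY)" | "pauli_mult PX PZ = (-\<i>, PY)"

definition string_mult :: "pauli list \<Rightarrow> pauli list \<Rightarrow> pauli list" where
  "string_mult P Q = map2 (\<lambda>a b. snd (pauli_mult a b)) P Q"

definition string_phase :: "pauli list \<Rightarrow> pauli list \<Rightarrow> complex" where
  "string_phase P Q = prod_list (map2 (\<lambda>a b. fst (pauli_mult a b)) P Q)"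

lemma string_mult_simps [simp]:
  "string_mult [] [] = []"
  "string_mult (a # P) (b # Q) = snd (pauli_mult a b) # string_mult P Q"
  by (simp_all add: string_mult_def)

lemma string_phase_simps [simp]:
  "string_phase [] [] = 1"
  "string_phase (a # P) (b # Q) = fst (pauli_mult a b) * string_phase P Q"
  by (simp_all add: string_phase_def)

lemma length_string_mult [simp]: "length (string_mult P Q) = min (length P) (length Q)"
  by (simp add: string_mult_def)

lemma string_mult_commute: "string_mult Q P = string_mult P Q"
proof (induction P Q rule: list_induct2')
  case (4 a P b Q)
  then show ?case by (cases a; cases b) auto
qed (simp_all add: string_mult_def)

lemma pauli_entry_mult:
  assumes "a < 2" "c < 2"
  shows "pauli_entry A a 0 * pauli_entry B 0 c + pauli_entry A a 1 * pauli_entry B 1 c =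
         fst (pauli_mult A B) * pauli_entry (snd (pauli_mult A B)) a c"
  using assms by (cases A; cases B) (auto simp: less_Suc_eq numeral_2_eq_2)

lemma pauli_string_mat_carrier [simp]:
  "pauli_string_mat ws \<in> carrier_mat (2^length ws) (2^length ws)"
  by (simp add: pauli_string_mat_def Let_def)

lemma dim_pauli_string_mat [simp]:
  "dim_row (pauli_string_mat ws) = 2^length ws"
  "dim_col (pauli_string_mat ws) = 2^length ws"
  by (simp_all add: pauli_string_mat_def Let_def)

lemma index_pauli_string_mat_Cons:
  assumes "length ws = n" "r < 2^Suc n" "c < 2^Suc n"
  shows "pauli_string_mat (A # ws) $$ (r, c) =
    pauli_entry A (r div 2^n) (c div 2^n) * pauli_string_mat ws $$ (r mod 2^n, c mod 2^n)"
proof -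
  have low_bit: "x mod 2^n div 2^(n - Suc k) mod 2 = x div 2^(n - Suc k) mod 2"
    if "k < n" for x k :: nat
    using that by (auto simp: mod2_eq_if even_mod_exp_div_exp_iff)
  have top_bit: "r div 2^n mod 2 = r div 2^n" "c div 2^n mod 2 = c div 2^n"
    using assms(2,3) by (simp_all add: less_mult_imp_div_less)
  have "(\<Prod>k<n. pauli_entry (ws ! k) (r div 2^(n - Suc k) mod 2) (c div 2^(n - Suc k) mod 2)) =
        (\<Prod>k<n. pauli_entry (ws ! k) (r mod 2^n div 2^(n - Suc k) mod 2)
                                     (c mod 2^n div 2^(n - Suc k) mod 2))"
    by (rule prod.cong) (simp_all add: low_bit)
  with assms show ?thesis
    by (simp add: pauli_string_mat_def prod.lessThan_Suc_shift top_bit del: prod.lessThan_Suc)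
qed

lemma smult_four_block_mat:
  assumes "A \<in> carrier_mat nr1 nc1" "B \<in> carrier_mat nr1 nc2"
    "C \<in> carrier_mat nr2 nc1" "D \<in> carrier_mat nr2 nc2"
  shows "k \<cdot>\<^sub>m four_block_mat A B C D =
    four_block_mat (k \<cdot>\<^sub>m A) (k \<cdot>\<^sub>m B) (k \<cdot>\<^sub>m C) (k \<cdot>\<^sub>m D)"
  using assms by (intro eq_matI) auto

lemma pauli_string_mat_Cons:
  "pauli_string_mat (A # ws) = four_block_mat
     (pauli_entry A 0 0 \<cdot>\<^sub>m pauli_string_mat ws) (pauli_entry A 0 1 \<cdot>\<^sub>m pauli_string_mat ws)
     (pauli_entry A 1 0 \<cdot>\<^sub>m pauli_string_mat ws) (pauli_entry A 1 1 \<cdot>\<^sub>m pauli_string_mat ws)"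
  by (rule eq_matI)
    (auto simp: index_pauli_string_mat_Cons[OF refl] le_div_geq le_mod_geq not_less)

lemma smult_smult_mat: "a \<cdot>\<^sub>m (b \<cdot>\<^sub>m A) = (a * b :: 'a :: semigroup_mult) \<cdot>\<^sub>m A"
  by (rule eq_matI) (auto simp: mult.assoc)

lemma smult_mult_smult_mat:
  assumes "A \<in> carrier_mat nr n" "B \<in> carrier_mat n nc"
  shows "(a \<cdot>\<^sub>m A) * (b \<cdot>\<^sub>m B) = (a * b :: 'a :: comm_semiring_0) \<cdot>\<^sub>m (A * B)"
  unfolding mult_smult_assoc_mat[OF assms(1) smult_carrier_mat[OF assms(2)]]
    mult_smult_distrib[OF assms] smult_smult_mat ..

lemma smult_mult_add_smult_mult:
  assumes "X \<in> carrier_mat N N" "Y \<in> carrier_mat N N"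
  shows "(a \<cdot>\<^sub>m X) * (b \<cdot>\<^sub>m Y) + (c \<cdot>\<^sub>m X) * (d \<cdot>\<^sub>m Y) =
    (a * b + c * d :: 'a :: comm_semiring_0) \<cdot>\<^sub>m (X * Y)"
  using assms by (intro eq_matI) (auto simp: algebra_simps)

lemma pauli_string_mat_mult:
  "length P = length Q \<Longrightarrow>
   pauli_string_mat P * pauli_string_mat Q = string_phase P Q \<cdot>\<^sub>m pauli_string_mat (string_mult P Q)"
proof (induction P Q rule: list_induct2)
  case Nil
  show ?case
    by (rule eq_matI) (auto simp: pauli_string_mat_def scalar_prod_def)
next
  case (Cons A P B Q)
  let ?M = pauli_string_mat and ?c = "fst (pauli_mult A B)" and ?C = "snd (pauli_mult A B)"
  let ?R = "string_mult P Q"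
  have carrier: "?M P \<in> carrier_mat (2^length P) (2^length P)"
    "?M Q \<in> carrier_mat (2^length P) (2^length P)"
    "?M ?R \<in> carrier_mat (2^length P) (2^length P)"
    using Cons.hyps pauli_string_mat_carrier[of P] pauli_string_mat_carrier[of Q]
      pauli_string_mat_carrier[of ?R]
    by simp_all
  let ?blk = "\<lambda>a b. (pauli_entry A a 0 \<cdot>\<^sub>m ?M P) * (pauli_entry B 0 b \<cdot>\<^sub>m ?M Q)
      + (pauli_entry A a 1 \<cdot>\<^sub>m ?M P) * (pauli_entry B 1 b \<cdot>\<^sub>m ?M Q)"
  have block: "?blk a b = (?c * string_phase P Q) \<cdot>\<^sub>m (pauli_entry ?C a b \<cdot>\<^sub>m ?M ?R)"
    if "a < 2" "b < 2" for a b
  proof -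
    have "?blk a b = (?c * pauli_entry ?C a b) \<cdot>\<^sub>m (?M P * ?M Q)"
      using smult_mult_add_smult_mult[OF carrier(1,2)] pauli_entry_mult[OF that] by simp
    then show ?thesis
      by (simp add: Cons.IH smult_smult_mat ac_simps)
  qed
  have "?M (A # P) * ?M (B # Q) = four_block_mat (?blk 0 0) (?blk 0 1) (?blk 1 0) (?blk 1 1)"
    unfolding pauli_string_mat_Cons
    by (rule mult_four_block_mat) (use carrier in \<open>auto intro!: smult_carrier_mat\<close>)
  also have "\<dots> = string_phase (A # P) (B # Q) \<cdot>\<^sub>m ?M (string_mult (A # P) (B # Q))"
    unfolding pauli_string_mat_Cons string_phase_simps string_mult_simps
    by (simp add: block del: One_nat_def)
      (rule smult_four_block_mat[symmetric]; use carrier in \<open>auto intro!: smult_carrier_mat\<close>)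
  finally show ?case .
qed

lemma string_phase_swap:
  "length P = length Q \<Longrightarrow> string_phase Q P = cnj (string_phase P Q)"
proof (induction P Q rule: list_induct2)
  case (Cons a P b Q)
  then show ?case by (cases a; cases b) auto
qed simp

lemma lie_subalg_anticommuting_product:
  assumes L: "real_lie_subalg_u (2^n) L" and len: "length P = n" "length Q = n"
    and P: "\<i> \<cdot>\<^sub>m pauli_string_mat P \<in> L" and Q: "\<i> \<cdot>\<^sub>m pauli_string_mat Q \<in> L"
    and anti: "string_phase P Q \<in> {\<i>, -\<i>}"
  shows "\<i> \<cdot>\<^sub>m pauli_string_mat (string_mult P Q) \<in> L"
proof -
  let ?M = pauli_string_mat and ?c = "string_phase P Q" and ?R = "string_mult P Q"
  have carrier: "?M P \<in> carrier_mat (2^n) (2^n)" "?M Q \<in> carrier_mat (2^n) (2^n)"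
    "?M ?R \<in> carrier_mat (2^n) (2^n)"
    using len pauli_string_mat_carrier[of P] pauli_string_mat_carrier[of Q]
      pauli_string_mat_carrier[of ?R]
    by simp_all
  have "(\<i> \<cdot>\<^sub>m ?M P) * (\<i> \<cdot>\<^sub>m ?M Q) - (\<i> \<cdot>\<^sub>m ?M Q) * (\<i> \<cdot>\<^sub>m ?M P)
      = (cnj ?c - ?c) \<cdot>\<^sub>m ?M ?R"
    using carrier len
    by (simp add: smult_mult_smult_mat[OF carrier(1,2)] smult_mult_smult_mat[OF carrier(2,1)]
        pauli_string_mat_mult string_mult_commute[of Q P] string_phase_swap[of P Q])
      (intro eq_matI; simp add: algebra_simps)
  also have "cnj ?c - ?c = -2 * ?c"
    using anti by auto
  \<comment> \<open>the phase is \<open>\<plusminus>\<i>\<close>, so \<open>\<i> * ?c\<close> is the real number \<open>\<plusminus>1\<close>\<close>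
  finally have "\<i> \<cdot>\<^sub>m ?M ?R = complex_of_real (Re (\<i> * ?c) / 2) \<cdot>\<^sub>m
      ((\<i> \<cdot>\<^sub>m ?M P) * (\<i> \<cdot>\<^sub>m ?M Q) - (\<i> \<cdot>\<^sub>m ?M Q) * (\<i> \<cdot>\<^sub>m ?M P))"
    using anti carrier by (intro eq_matI) auto
  with L P Q show ?thesis
    unfolding real_lie_subalg_u_def by metis
qed

definition pad_string :: "nat \<Rightarrow> nat \<Rightarrow> pauli list \<Rightarrow> pauli list" where
  "pad_string n s w = replicate s PI @ w @ replicate (n - s - length w) PI"

lemma string_mult_append:
  "length xs = length ys \<Longrightarrow> string_mult (xs @ zs) (ys @ us) = string_mult xs ys @ string_mult zs us"
  by (simp add: string_mult_def)

lemma string_phase_append: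
  "length xs = length ys \<Longrightarrow> string_phase (xs @ zs) (ys @ us) = string_phase xs ys * string_phase zs us"
  by (simp add: string_phase_def)

lemma string_mult_replicate_PI [simp]: "string_mult (replicate k PI) (replicate k PI) = replicate k PI"
  by (induction k) auto

lemma string_phase_replicate_PI [simp]: "string_phase (replicate k PI) (replicate k PI) = 1"
  by (induction k) auto

lemma length_pad_string: "s + length w \<le> n \<Longrightarrow> length (pad_string n s w) = n"
  by (simp add: pad_string_def)

lemma string_mult_pad_string:
  "length v = length w \<Longrightarrow>
    string_mult (pad_string n s v) (pad_string n s w) = pad_string n s (string_mult v w)"
  by (simp add: pad_string_def string_mult_append)

lemma string_phase_pad_string:
  "length v = length w \<Longrightarrow> string_phase (pad_string n s v) (pad_string n s w) = string_phase v w"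
  by (simp add: pad_string_def string_phase_append)

lemma pad_string_two_local:
  assumes "t + 1 < k" "s + k \<le> n"
  shows "pad_string n s (two_local k t A B) = two_local n (s + t) A B"
proof -
  have "replicate (k - t - 2) PI @ replicate (n - s - k) PI = replicate (n - (s + t) - 2) (PI :: pauli)"
    using assms by (simp add: replicate_add[symmetric])
  moreover have "length (two_local k t A B) = k"
    using assms by (simp add: two_local_def)
  ultimately show ?thesis
    using assms unfolding pad_string_def by (simp add: two_local_def replicate_add)
qed

definition local_generators :: "(pauli \<times> pauli) set \<Rightarrow> nat \<Rightarrow> pauli list set" where
  "local_generators G n = {two_local n j A B | j A B. (A, B) \<in> G \<and> j + 1 < n}"

inductive derivable :: "(pauli \<times> pauli) set \<Rightarrow> nat \<Rightarrow> pauli list \<Rightarrow> bool" for G k where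
  generator: "(A, B) \<in> G \<Longrightarrow> t + 1 < k \<Longrightarrow> derivable G k (two_local k t A B)"
| commutator: "derivable G k P \<Longrightarrow> derivable G k Q \<Longrightarrow> string_phase P Q \<in> {\<i>, -\<i>} \<Longrightarrow>
    derivable G k (string_mult P Q)"

lemma length_derivable: "derivable G k w \<Longrightarrow> length w = k"
  by (induction rule: derivable.induct) (auto simp: two_local_def)

lemma derivable_pad_string_mem:
  assumes "derivable G k w" and L: "real_lie_subalg_u (2^n) L"
    and gens: "\<forall>P \<in> local_generators G n. \<i> \<cdot>\<^sub>m pauli_string_mat P \<in> L" and "s + k \<le> n"
  shows "\<i> \<cdot>\<^sub>m pauli_string_mat (pad_string n s w) \<in> L"
  using assms(1)
proof (induction rule: derivable.induct)
  case (generator A B t)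
  then have "two_local n (s + t) A B \<in> local_generators G n"
    using \<open>s + k \<le> n\<close> unfolding local_generators_def by force
  with gens show ?case
    using generator \<open>s + k \<le> n\<close> by (simp add: pad_string_two_local)
next
  case (commutator P Q)
  have len: "length P = k" "length Q = k"
    using commutator.hyps(1,2) by (simp_all add: length_derivable)
  have "string_phase (pad_string n s P) (pad_string n s Q) \<in> {\<i>, -\<i>}"
    using commutator.hyps(3) len by (simp add: string_phase_pad_string)
  from lie_subalg_anticommuting_product[OF L _ _ commutator.IH this] show ?case
    using len \<open>s + k \<le> n\<close> by (simp add: length_pad_string string_mult_pad_string)
qed

lemma lie_gen_antimono:
  assumes "\<And>L. real_lie_subalg_u (2^n) L \<Longrightarrow> \<forall>P\<in>S. \<i> \<cdot>\<^sub>m pauli_string_mat P \<in> L \<Longrightarrow>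
    \<forall>P\<in>S'. \<i> \<cdot>\<^sub>m pauli_string_mat P \<in> L"
  shows "lie_gen n S' \<subseteq> lie_gen n S"
  unfolding lie_gen_def using assms by (intro Inter_anti_mono) blast

lemma G_alg_mono: "G \<subseteq> G' \<Longrightarrow> G_alg G n \<subseteq> G_alg G' n"
  unfolding G_alg_def by (rule lie_gen_antimono) blast

lemma G_alg_subset_if_derivable:
  assumes "2 \<le> k" "k \<le> n"
    and derivable_G': "\<And>A B t. (A, B) \<in> G' \<Longrightarrow> t + 1 < k \<Longrightarrow> derivable G k (two_local k t A B)"
  shows "G_alg G' n \<subseteq> G_alg G n"
  unfolding G_alg_def local_generators_def[symmetric]
proof (rule lie_gen_antimono, intro ballI)
  fix L P
  assume L: "real_lie_subalg_u (2^n) L"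
    and gens: "\<forall>P \<in> local_generators G n. \<i> \<cdot>\<^sub>m pauli_string_mat P \<in> L"
    and "P \<in> local_generators G' n"
  then obtain j A B where P: "P = two_local n j A B" and AB: "(A, B) \<in> G'" and j: "j + 1 < n"
    unfolding local_generators_def by blast
  define s where "s = min j (n - k)"
  have "j - s + 1 < k" "s + k \<le> n" "s + (j - s) = j"
    using assms(1,2) j by (auto simp: s_def)
  with derivable_pad_string_mem[OF derivable_G'[OF AB] L gens]
  show "\<i> \<cdot>\<^sub>m pauli_string_mat P \<in> L"
    unfolding P by (metis pad_string_two_local)
qed

lemma a16_derivable_from_a11:
  assumes "(A, B) \<in> a16" "t + 1 < 4"
  shows "derivable a11 4 (two_local 4 t A B)"
proof -
  note gen = derivable.generator[where G = a11 and k = 4]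
  note comm = derivable.commutator[where G = a11 and k = 4]
  have XYII: "derivable a11 4 [PX,PY,PI,PI]"
    using gen[of PX PY 0] by (simp add: a11_def two_local_def numeral_eq_Suc)
  have IXYI: "derivable a11 4 [PI,PX,PY,PI]"
    using gen[of PX PY 1] by (simp add: a11_def two_local_def numeral_eq_Suc)
  have IIXY: "derivable a11 4 [PI,PI,PX,PY]"
    using gen[of PX PY 2] by (simp add: a11_def two_local_def numeral_eq_Suc)
  have YXII: "derivable a11 4 [PY,PX,PI,PI]"
    using gen[of PY PX 0] by (simp add: a11_def two_local_def numeral_eq_Suc)
  have IYXI: "derivable a11 4 [PI,PY,PX,PI]"
    using gen[of PY PX 1] by (simp add: a11_def two_local_def numeral_eq_Suc)
  have YZII: "derivable a11 4 [PY,PZ,PI,PI]"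
    using gen[of PY PZ 0] by (simp add: a11_def two_local_def numeral_eq_Suc)
  have IYZI: "derivable a11 4 [PI,PY,PZ,PI]"
    using gen[of PY PZ 1] by (simp add: a11_def two_local_def numeral_eq_Suc)
  have YYYI: "derivable a11 4 [PY,PY,PY,PI]" using comm[OF IXYI YZII] by simp
  have IZYI: "derivable a11 4 [PI,PZ,PY,PI]" using comm[OF YXII YYYI] by simp
  have IYYY: "derivable a11 4 [PI,PY,PY,PY]" using comm[OF IIXY IYZI] by simp
  have IIZY: "derivable a11 4 [PI,PI,PZ,PY]" using comm[OF IYXI IYYY] by simp
  have XZYI: "derivable a11 4 [PX,PZ,PY,PI]" using comm[OF XYII IXYI] by simp
  have YYZY: "derivable a11 4 [PY,PY,PZ,PY]" using comm[OF IIXY YYYI] by simp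
  have YIYY: "derivable a11 4 [PY,PI,PY,PY]" using comm[OF IYXI YYZY] by simp
  have ZZIY: "derivable a11 4 [PZ,PZ,PI,PY]" using comm[OF XZYI YIYY] by simp
  have ZXYI: "derivable a11 4 [PZ,PX,PY,PI]" using comm[OF IYYY ZZIY] by simp
  have ZYII: "derivable a11 4 [PZ,PY,PI,PI]" using comm[OF IZYI ZXYI] by simp
  have "derivable a11 4 (two_local 4 t PZ PY)"
    using \<open>t + 1 < 4\<close> ZYII IZYI IIZY by (auto simp: two_local_def less_Suc_eq numeral_eq_Suc)
  then show ?thesis
    using assms gen by (auto simp: a11_def a16_def)
qed

lemma a20_derivable_from_a13:
  assumes "(A, B) \<in> a20" "t + 1 < 3"
  shows "derivable a13 3 (two_local 3 t A B)"
proof -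
  note gen = derivable.generator[where G = a13 and k = 3]
  note comm = derivable.commutator[where G = a13 and k = 3]
  have XXI: "derivable a13 3 [PX,PX,PI]"
    using gen[of PX PX 0] by (simp add: a13_def two_local_def)
  have IXX: "derivable a13 3 [PI,PX,PX]"
    using gen[of PX PX 1] by (simp add: a13_def two_local_def)
  have YYI: "derivable a13 3 [PY,PY,PI]"
    using gen[of PY PY 0] by (simp add: a13_def two_local_def)
  have IYY: "derivable a13 3 [PI,PY,PY]"
    using gen[of PY PY 1] by (simp add: a13_def two_local_def)
  have YZI: "derivable a13 3 [PY,PZ,PI]"
    using gen[of PY PZ 0] by (simp add: a13_def two_local_def)
  have IYZ: "derivable a13 3 [PI,PY,PZ]"
    using gen[of PY PZ 1] by (simp add: a13_def two_local_def)
  have XZY: "derivable a13 3 [PX,PZ,PY]" using comm[OF XXI IYY] by simp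
  have YYX: "derivable a13 3 [PY,PY,PX]" using comm[OF IXX YZI] by simp
  have YIY: "derivable a13 3 [PY,PI,PY]" using comm[OF IYZ YYX] by simp
  have ZZI: "derivable a13 3 [PZ,PZ,PI]" using comm[OF XZY YIY] by simp
  have IXI: "derivable a13 3 [PI,PX,PI]" using comm[OF YYI YZI] by simp
  have IZZ: "derivable a13 3 [PI,PZ,PZ]" using comm[OF IYZ IXI] by simp
  have XIX: "derivable a13 3 [PX,PI,PX]" using comm[OF XZY IZZ] by simp
  have ZYI: "derivable a13 3 [PZ,PY,PI]" using comm[OF YYX XIX] by simp
  have IZY: "derivable a13 3 [PI,PZ,PY]" using comm[OF IYY IXI] by simp
  have "derivable a13 3 (two_local 3 t PZ PZ)" "derivable a13 3 (two_local 3 t PZ PY)"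
    using \<open>t + 1 < 3\<close> ZZI IZZ ZYI IZY by (auto simp: two_local_def less_Suc_eq numeral_eq_Suc)
  then show ?thesis
    using assms gen by (auto simp: a13_def a20_def)
qed

lemma a13_derivable_from_a20:
  assumes "(A, B) \<in> a13" "t + 1 < 3"
  shows "derivable a20 3 (two_local 3 t A B)"
proof -
  note gen = derivable.generator[where G = a20 and k = 3]
  note comm = derivable.commutator[where G = a20 and k = 3]
  have YYI: "derivable a20 3 [PY,PY,PI]"
    using gen[of PY PY 0] by (simp add: a20_def two_local_def)
  have IYY: "derivable a20 3 [PI,PY,PY]"
    using gen[of PY PY 1] by (simp add: a20_def two_local_def)
  have IZZ: "derivable a20 3 [PI,PZ,PZ]"
    using gen[of PZ PZ 1] by (simp add: a20_def two_local_def)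
  have IZY: "derivable a20 3 [PI,PZ,PY]"
    using gen[of PZ PY 1] by (simp add: a20_def two_local_def)
  have YXY: "derivable a20 3 [PY,PX,PY]" using comm[OF YYI IZY] by simp
  have YZI: "derivable a20 3 [PY,PZ,PI]" using comm[OF IYY YXY] by simp
  have IXI: "derivable a20 3 [PI,PX,PI]" using comm[OF IYY IZY] by simp
  have IYZ: "derivable a20 3 [PI,PY,PZ]" using comm[OF IZZ IXI] by simp
  have "derivable a20 3 (two_local 3 t PY PZ)"
    using \<open>t + 1 < 3\<close> YZI IYZ by (auto simp: two_local_def less_Suc_eq numeral_eq_Suc)
  then show ?thesis
    using assms gen by (auto simp: a13_def a20_def)
qed

theorem mainTheorem10:
  shows "(\<forall>n::nat. n \<ge> 4 \<longrightarrow> G_alg a11 n = G_alg a16 n) \<and>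
         (\<forall>n::nat. n \<ge> 3 \<longrightarrow> G_alg a13 n = G_alg a20 n)"
proof (intro conjI allI impI subset_antisym)
  fix n :: nat
  assume "n \<ge> 4"
  show "G_alg a11 n \<subseteq> G_alg a16 n"
    by (rule G_alg_mono) (auto simp: a11_def a16_def)
  show "G_alg a16 n \<subseteq> G_alg a11 n"
    using G_alg_subset_if_derivable[OF _ \<open>n \<ge> 4\<close> a16_derivable_from_a11] by simp
next
  fix n :: nat
  assume "n \<ge> 3"
  show "G_alg a13 n \<subseteq> G_alg a20 n"
    using G_alg_subset_if_derivable[OF _ \<open>n \<ge> 3\<close> a13_derivable_from_a20] by simp
  show "G_alg a20 n \<subseteq> G_alg a13 n"
    using G_alg_subset_if_derivable[OF _ \<open>n \<ge> 3\<close> a20_derivable_from_a13] by simp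
qed

end
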